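(* Let $\mathcal{P}$ be the class of unimodal probability measures on $\mathbb{R}$ (with its Borel $\sigma$-algebra) that admit a smooth and bounded density. Then the mode functional $\Gamma_{\text{mode}}:\mathcal{P}\to\mathbb{R}$ has infinite identifiable elicitation complexity with respect to $\mathcal{P}$. That is, there is no $k\in\mathbb{N}$ for which there exist a property $\hat\Gamma:\mathcal{P}\to\mathbb{R}^k$ that is both elicitable and identifiable, and a function $f:\mathbb{R}^k\to\mathbb{R}$ with $\Gamma_{\text{mode}}=f\circ\hat\Gamma$.
   Context: A property on a class $\mathcal{P}$ of probability measures on $(\mathcal{Y},\mathcal{F})$ is a map $\Gamma:\mathcal{P}\to\mathcal{R}$. A property $\Gamma:\mathcal{P}\to\mathcal{R}$ is elicitable if there is a loss function $L:\mathcal{R}\times\mathcal{Y}\to\mathbb{R}$ with $\{\Gamma(P)\}=\arg\min_r E_P L(r,Y)$ for every $P\in\mathcal{P}$. A property $\Gamma:\mathcal{P}\to\mathcal{R}\subseteq\mathbb{R}^k$ is identifiable if there is an identification function $V:\mathcal{R}\times\mathcal{Y}\to\mathbb{R}^k$ such that for all $P\in\mathcal{P}$ and $r\in\mathcal{R}$, $\Gamma(P)=r$ if and only if $E_P V(r,Y)=0$. The identifiable elicitation complexity of $\Gamma$ is the least $k$ such that $\Gamma=f\circ\hat\Gamma$ for some $\hat\Gamma:\mathcal{P}\to\mathbb{R}^k$ that is elicitable and identifiable and some $f:\mathbb{R}^k\to\mathcal{R}$; it is infinite if no such $k$ exists. Mode: for $P$ with distribution function $F$ and $\varepsilon>0$,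 a modal midpoint $\Gamma_\varepsilon(P)$ is any $x\in\arg\max_x\big(F(x+\varepsilon)-\lim_{z\uparrow x-\varepsilon}F(z)\big)$. If there is a sequence $\varepsilon_n\to0$ and a choice of modal midpoints $\Gamma_{\varepsilon_n}(P)$ converging to a real number, that limit is a mode of $P$ (for a continuous density it is the global maximizer of the density). $P$ is called unimodal if its mode is well-defined and unique; $\Gamma_{\text{mode}}(P)$ denotes this unique mode. *)

theory Defs
  imports "HOL-Probability.Probability"
begin

definition smooth_fun :: "(real \<Rightarrow> real) \<Rightarrow> bool" where
  "smooth_fun d \<longleftrightarrow> (\<forall>n x. ((deriv ^^ n) d) differentiable (at x))"

definition has_smooth_bounded_density :: "real measure \<Rightarrow> bool" where
  "has_smooth_bounded_density M \<longleftrightarrow>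
     (\<exists>d. smooth_fun d \<and> bounded (range d) \<and> (\<forall>x. 0 \<le> d x) \<and>
          M = density lborel (\<lambda>x. ennreal (d x)))"

definition modal_midpoints :: "real measure \<Rightarrow> real \<Rightarrow> real set" where
  "modal_midpoints M \<epsilon> =
     {x. \<forall>y. cdf M (y + \<epsilon>) - Lim (at_left (y - \<epsilon>)) (cdf M)
            \<le> cdf M (x + \<epsilon>) - Lim (at_left (x - \<epsilon>)) (cdf M)}"

definition is_mode :: "real measure \<Rightarrow> real \<Rightarrow> bool" where
  "is_mode M m \<longleftrightarrow>
     (\<exists>\<epsilon> xs. (\<forall>n. 0 < \<epsilon> n) \<and> \<epsilon> \<longlonglongrightarrow> 0 \<and>
             (\<forall>n. xs n \<in> modal_midpoints M (\<epsilon> n)) \<and> xs \<longlonglongrightarrow> m)"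

definition unimodal :: "real measure \<Rightarrow> bool" where
  "unimodal M \<longleftrightarrow> (\<exists>!m. is_mode M m)"

definition mode :: "real measure \<Rightarrow> real" where
  "mode M = (THE m. is_mode M m)"

definition mode_class :: "real measure set" where
  "mode_class = {M. prob_space M \<and> sets M = sets borel \<and>
                    has_smooth_bounded_density M \<and> unimodal M}"

text \<open>R^k, represented as functions nat => real vanishing from index k on.\<close>
definition Rk :: "nat \<Rightarrow> (nat \<Rightarrow> real) set" where
  "Rk k = {r. \<forall>i\<ge>k. r i = 0}"

definition elicitable ::
  "'a measure set \<Rightarrow> ('a measure \<Rightarrow> 'r) \<Rightarrow> 'r set \<Rightarrow> bool" where
  "elicitable Ps \<Gamma> R \<longleftrightarrow>
     (\<exists>L :: 'r \<Rightarrow> 'a \<Rightarrow> real.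
        (\<forall>P\<in>Ps. \<forall>r\<in>R. integrable P (L r)) \<and>
        (\<forall>P\<in>Ps. {\<Gamma> P} =
            {r\<in>R. \<forall>r'\<in>R. (\<integral>y. L r y \<partial>P) \<le> (\<integral>y. L r' y \<partial>P)}))"

definition identifiable ::
  "'a measure set \<Rightarrow> ('a measure \<Rightarrow> (nat \<Rightarrow> real)) \<Rightarrow> nat \<Rightarrow> bool" where
  "identifiable Ps \<Gamma> k \<longleftrightarrow>
     (\<exists>V :: (nat \<Rightarrow> real) \<Rightarrow> 'a \<Rightarrow> (nat \<Rightarrow> real).
        (\<forall>P\<in>Ps. \<forall>r\<in>Rk k. \<forall>i<k. integrable P (\<lambda>y. V r y i)) \<and>
        (\<forall>P\<in>Ps. \<forall>r\<in>Rk k. \<Gamma> P = r \<longleftrightarrow> (\<forall>i<k. (\<integral>y. V r y i \<partial>P) = 0)))"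

definition infinite_ident_elic_complexity ::
  "'a measure set \<Rightarrow> ('a measure \<Rightarrow> 'b) \<Rightarrow> bool" where
  "infinite_ident_elic_complexity Ps \<Gamma> \<longleftrightarrow>
     \<not> (\<exists>k (\<Gamma>h :: 'a measure \<Rightarrow> (nat \<Rightarrow> real)) (f :: (nat \<Rightarrow> real) \<Rightarrow> 'b).
          (\<forall>P\<in>Ps. \<Gamma>h P \<in> Rk k) \<and> elicitable Ps \<Gamma>h (Rk k) \<and>
          identifiable Ps \<Gamma>h k \<and> (\<forall>P\<in>Ps. \<Gamma> P = f (\<Gamma>h P)))"

end

theory Submission
  imports Defs
begin

(*
  Let P0 be the Gaussian law with density g(x) = exp(-x^2) / sqrt pi,
  whose mode is 0, and let W_1, ..., W_k be the components of the identification function at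
  Gamma(P0), so that every W_i integrates to 0 under P0. Perturbing the density to
  g(x) (1 + sum_j c_j x exp(-x^2 / t_j^2)) keeps the total mass (the bumps are odd), changes the
  integral of W_i by sum_j c_j a_i(t_j) with a_i(t) = O(t), and moves the mode to the side given by
  the sign of sum_j c_j. Since every a_i vanishes as t -> 0, finitely many small scales admit
  coefficients with sum_j c_j = 1 and sum_j c_j a_i(t_j) = 0 for all i < k. Scaled down, this
  perturbation yields a smooth, bounded, strictly unimodal density whose law has the same value of
  Gamma as P0, hence the same value of f o Gamma, but a positive mode.
*)

section \<open>Functions generated by polynomials and exp\<close>

inductive_set elementary_funs :: "(real \<Rightarrow> real) set" where
  const: "(\<lambda>x. c) \<in> elementary_funs"
| ident: "(\<lambda>x. x) \<in> elementary_funs"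
| add: "f \<in> elementary_funs \<Longrightarrow> g \<in> elementary_funs \<Longrightarrow> (\<lambda>x. f x + g x) \<in> elementary_funs"
| mult: "f \<in> elementary_funs \<Longrightarrow> g \<in> elementary_funs \<Longrightarrow> (\<lambda>x. f x * g x) \<in> elementary_funs"
| exp: "f \<in> elementary_funs \<Longrightarrow> (\<lambda>x. exp (f x)) \<in> elementary_funs"

lemma elementary_funs_has_derivative:
  "f \<in> elementary_funs \<Longrightarrow> \<exists>f'\<in>elementary_funs. \<forall>x. (f has_real_derivative f' x) (at x)"
proof (induction rule: elementary_funs.induct)
  case const
  show ?case by (rule bexI[of _ "\<lambda>x. 0"]) (auto intro: elementary_funs.const)
next
  case ident
  show ?case by (rule bexI[of _ "\<lambda>x. 1"]) (auto intro: elementary_funs.const)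
next
  case (add f g)
  then obtain f' g' where "f' \<in> elementary_funs" "g' \<in> elementary_funs"
    "\<forall>x. (f has_real_derivative f' x) (at x)" "\<forall>x. (g has_real_derivative g' x) (at x)"
    by blast
  then show ?case
    by (intro bexI[of _ "\<lambda>x. f' x + g' x"]) (auto intro: elementary_funs.add derivative_intros)
next
  case (mult f g)
  then obtain f' g' where "f' \<in> elementary_funs" "g' \<in> elementary_funs"
    "\<forall>x. (f has_real_derivative f' x) (at x)" "\<forall>x. (g has_real_derivative g' x) (at x)"
    by blast
  with mult.hyps show ?case
    by (intro bexI[of _ "\<lambda>x. f' x * g x + f x * g' x"])
      (auto intro!: elementary_funs.add elementary_funs.mult derivative_eq_intros)
next
  case (exp f)
  then obtain f' where "f' \<in> elementary_funs" "\<forall>x. (f has_real_derivative f' x) (at x)"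
    by blast
  with exp.hyps show ?case
    by (intro bexI[of _ "\<lambda>x. exp (f x) * f' x"])
      (auto intro!: elementary_funs.mult elementary_funs.exp derivative_eq_intros)
qed

lemma deriv_elementary_funs: "f \<in> elementary_funs \<Longrightarrow> deriv f \<in> elementary_funs"
  using elementary_funs_has_derivative DERIV_imp_deriv by (metis (no_types, lifting) ext)

lemma smooth_fun_elementary: "f \<in> elementary_funs \<Longrightarrow> smooth_fun f"
proof -
  assume "f \<in> elementary_funs"
  then have "(deriv ^^ n) f \<in> elementary_funs" for n
    by (induction n) (auto intro: deriv_elementary_funs)
  then show ?thesis
    unfolding smooth_fun_def using elementary_funs_has_derivative real_differentiable_def by blast
qed

section \<open>Finite combinations over scales\<close>

definition lincomb :: "(real \<times> real) list \<Rightarrow> (real \<Rightarrow> real) \<Rightarrow> real" where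
  "lincomb cs h = (\<Sum>(t, c)\<leftarrow>cs. c * h t)"

definition coeff_norm :: "(real \<times> real) list \<Rightarrow> real" where
  "coeff_norm cs = (\<Sum>(t, c)\<leftarrow>cs. \<bar>c\<bar>)"

definition scaled_coeff_norm :: "(real \<times> real) list \<Rightarrow> real" where
  "scaled_coeff_norm cs = (\<Sum>(t, c)\<leftarrow>cs. \<bar>c\<bar> / t)"

definition scale_coeffs :: "real \<Rightarrow> (real \<times> real) list \<Rightarrow> (real \<times> real) list" where
  "scale_coeffs l cs = map (\<lambda>(t, c). (t, l * c)) cs"

lemma lincomb_Nil [simp]: "lincomb [] h = 0"
  and lincomb_Cons [simp]: "lincomb ((t, c) # cs) h = c * h t + lincomb cs h"
  and lincomb_append [simp]: "lincomb (cs @ ds) h = lincomb cs h + lincomb ds h"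
  by (simp_all add: lincomb_def)

lemma lincomb_scale_coeffs [simp]: "lincomb (scale_coeffs l cs) h = l * lincomb cs h"
  by (induction cs) (auto simp: scale_coeffs_def algebra_simps)

lemma lincomb_const_mult: "lincomb cs (\<lambda>t. k * h t) = k * lincomb cs h"
  by (induction cs) (auto simp: algebra_simps)

lemma lincomb_zero [simp]: "lincomb cs (\<lambda>_. 0) = 0"
  by (induction cs) auto

lemma fst_set_scale_coeffs [simp]: "fst ` set (scale_coeffs l cs) = fst ` set cs"
  by (force simp: scale_coeffs_def)

lemma coeff_norm_append [simp]: "coeff_norm (cs @ ds) = coeff_norm cs + coeff_norm ds"
  by (simp add: coeff_norm_def)

lemma coeff_norm_scale_coeffs [simp]: "coeff_norm (scale_coeffs l cs) = \<bar>l\<bar> * coeff_norm cs"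
  by (induction cs) (auto simp: coeff_norm_def scale_coeffs_def abs_mult algebra_simps)

lemma scaled_coeff_norm_scale_coeffs [simp]:
  "scaled_coeff_norm (scale_coeffs l cs) = \<bar>l\<bar> * scaled_coeff_norm cs"
  by (induction cs) (auto simp: scaled_coeff_norm_def scale_coeffs_def abs_mult algebra_simps)

lemma coeff_norm_nonneg: "0 \<le> coeff_norm cs"
  unfolding coeff_norm_def by (rule sum_list_nonneg) auto

lemma scaled_coeff_norm_nonneg: "fst ` set cs \<subseteq> {0<..} \<Longrightarrow> 0 \<le> scaled_coeff_norm cs"
  unfolding scaled_coeff_norm_def by (rule sum_list_nonneg) force

lemma has_real_derivative_lincomb:
  assumes "\<And>t. t \<in> fst ` set cs \<Longrightarrow> (f t has_real_derivative f' t x) (at x)"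
  shows "((\<lambda>x. lincomb cs (\<lambda>t. f t x)) has_real_derivative lincomb cs (\<lambda>t. f' t x)) (at x)"
  using assms by (induction cs) (force intro!: derivative_eq_intros)+

lemma lincomb_elementary_funs:
  assumes "\<And>t. t \<in> fst ` set cs \<Longrightarrow> f t \<in> elementary_funs"
  shows "(\<lambda>x. lincomb cs (\<lambda>t. f t x)) \<in> elementary_funs"
  using assms
  by (induction cs) (force intro: elementary_funs.intros)+

lemma abs_lincomb_le:
  assumes "\<And>t. t \<in> fst ` set cs \<Longrightarrow> \<bar>h t\<bar> \<le> g t"
  shows "\<bar>lincomb cs h\<bar> \<le> (\<Sum>(t, c)\<leftarrow>cs. \<bar>c\<bar> * g t)"
  using assms
proof (induction cs)
  case (Cons tc cs)
  obtain t c where tc: "tc = (t, c)" by force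
  have "\<bar>c * h t\<bar> \<le> \<bar>c\<bar> * g t"
    using Cons.prems[of t] by (simp add: tc abs_mult mult_left_mono)
  with Cons show ?case by (force simp: tc)
qed simp

lemma abs_lincomb_le_coeff_norm:
  assumes "\<And>t. t \<in> fst ` set cs \<Longrightarrow> \<bar>h t\<bar> \<le> B"
  shows "\<bar>lincomb cs h\<bar> \<le> B * coeff_norm cs"
proof -
  have "(\<Sum>(t, c)\<leftarrow>cs. \<bar>c\<bar> * B) = B * coeff_norm cs"
    by (induction cs) (auto simp: coeff_norm_def algebra_simps)
  then show ?thesis using abs_lincomb_le[of cs h "\<lambda>_. B", OF assms] by simp
qed

lemma abs_lincomb_le_scaled_coeff_norm:
  assumes "\<And>t. t \<in> fst ` set cs \<Longrightarrow> \<bar>h t\<bar> \<le> K / t"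
  shows "\<bar>lincomb cs h\<bar> \<le> K * scaled_coeff_norm cs"
proof -
  have "(\<Sum>(t, c)\<leftarrow>cs. \<bar>c\<bar> * (K / t)) = K * scaled_coeff_norm cs"
    by (induction cs) (auto simp: scaled_coeff_norm_def algebra_simps)
  then show ?thesis using abs_lincomb_le[of cs h "\<lambda>t. K / t", OF assms] by simp
qed

lemma abs_lincomb_le_small_scales:
  assumes "fst ` set cs \<subseteq> {0<..s}" and "s \<le> 1" and "0 \<le> C"
    and "\<forall>t\<in>{0<..1}. \<bar>h t\<bar> \<le> C * t"
  shows "\<bar>lincomb cs h\<bar> \<le> C * s * coeff_norm cs"
proof (rule abs_lincomb_le_coeff_norm)
  fix t assume "t \<in> fst ` set cs"
  with assms(1,2) have "t \<in> {0<..1}" "t \<le> s"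
    by auto
  with assms(4) have "\<bar>h t\<bar> \<le> C * t"
    by simp
  also have "\<dots> \<le> C * s"
    using \<open>t \<le> s\<close> \<open>0 \<le> C\<close> by (rule mult_left_mono)
  finally show "\<bar>h t\<bar> \<le> C * s" .
qed

lemma annihilating_affine_weight:
  fixes b1 b2 :: real
  assumes "b1 \<noteq> 0" "\<bar>b2\<bar> \<le> \<bar>b1\<bar> / 2"
  defines "l \<equiv> b2 / (b2 - b1)"
  shows "\<bar>l\<bar> \<le> 1" "\<bar>1 - l\<bar> \<le> 2" "l * b1 + (1 - l) * b2 = 0"
proof -
  have ne: "b2 - b1 \<noteq> 0" and large: "\<bar>b1\<bar> / 2 \<le> \<bar>b2 - b1\<bar>"
    using assms(1,2) by arith+
  show "\<bar>l\<bar> \<le> 1"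
    unfolding l_def using assms(2) large by (simp add: abs_divide divide_le_eq_1)
  have "1 - l = - b1 / (b2 - b1)"
    unfolding l_def using ne by (simp add: field_simps)
  then show "\<bar>1 - l\<bar> \<le> 2"
    using large assms(1) by (auto simp: abs_divide divide_le_eq)
  show "l * b1 + (1 - l) * b2 = 0"
    unfolding l_def using ne by (simp add: field_simps)
qed

lemma lincomb_affine_annihilation:
  assumes weights: "lincomb cs1 (\<lambda>_. 1) = 1" "lincomb cs2 (\<lambda>_. 1) = 1"
    and "lincomb cs1 h \<noteq> 0" and "\<bar>lincomb cs2 h\<bar> \<le> \<bar>lincomb cs1 h\<bar> / 2"
  obtains cs where "fst ` set cs = fst ` set cs1 \<union> fst ` set cs2" and "lincomb cs (\<lambda>_. 1) = 1"
    and "lincomb cs h = 0" and "coeff_norm cs \<le> coeff_norm cs1 + 2 * coeff_norm cs2"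
    and "\<And>g. lincomb cs1 g = 0 \<Longrightarrow> lincomb cs2 g = 0 \<Longrightarrow> lincomb cs g = 0"
proof -
  define l where "l = lincomb cs2 h / (lincomb cs2 h - lincomb cs1 h)"
  note l = annihilating_affine_weight[OF assms(3,4), folded l_def]
  define cs where "cs = scale_coeffs l cs1 @ scale_coeffs (1 - l) cs2"
  have "coeff_norm cs = \<bar>l\<bar> * coeff_norm cs1 + \<bar>1 - l\<bar> * coeff_norm cs2"
    by (simp add: cs_def)
  also have "\<dots> \<le> 1 * coeff_norm cs1 + 2 * coeff_norm cs2"
    using l(1,2) by (intro add_mono mult_right_mono) (auto simp: coeff_norm_nonneg)
  moreover have "fst ` set cs = fst ` set cs1 \<union> fst ` set cs2"
    unfolding cs_def set_append image_Un by simp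
  ultimately show ?thesis
    using l(3) weights by (intro that[of cs]) (auto simp: cs_def)
qed

text \<open>Induction on the number of constraints: a solution for the first \<open>k\<close> constraints whose
  \<open>k\<close>-th value does not vanish is combined with a second one supported on scales so small that
  its \<open>k\<close>-th value is at most half as large.\<close>
lemma exists_lincomb_annihilating:
  fixes a :: "real \<Rightarrow> nat \<Rightarrow> real"
  assumes "0 \<le> C" and "\<forall>t\<in>{0<..1}. \<forall>i<k. \<bar>a t i\<bar> \<le> C * t" and "s \<in> {0<..1}"
  shows "\<exists>cs. fst ` set cs \<subseteq> {0<..s} \<and> lincomb cs (\<lambda>_. 1) = 1 \<and> coeff_norm cs \<le> 3 ^ k
    \<and> (\<forall>i<k. lincomb cs (\<lambda>t. a t i) = 0)"
  using assms(2,3)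
proof (induction k arbitrary: s)
  case 0
  then show ?case
    by (intro exI[of _ "[(s, 1)]"]) (auto simp: coeff_norm_def)
next
  case (Suc k)
  have "\<forall>t\<in>{0<..1}. \<forall>i<k. \<bar>a t i\<bar> \<le> C * t"
    using Suc.prems(1) by simp
  note IH = Suc.IH[OF this]
  obtain cs1 where cs1: "fst ` set cs1 \<subseteq> {0<..s}" "lincomb cs1 (\<lambda>_. 1) = 1"
    "coeff_norm cs1 \<le> 3 ^ k" "\<forall>i<k. lincomb cs1 (\<lambda>t. a t i) = 0"
    using IH[OF Suc.prems(2)] by auto
  define b1 where "b1 = lincomb cs1 (\<lambda>t. a t k)"
  show ?case
  proof (cases "b1 = 0")
    case True
    with cs1 show ?thesis
      by (intro exI[of _ cs1]) (auto simp: b1_def less_Suc_eq intro: order_trans[of _ "3 ^ k"])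
  next
    case False
    define s2 where "s2 = min s (\<bar>b1\<bar> / (2 * (C + 1) * 3 ^ k))"
    have s2: "s2 \<in> {0<..1}" "s2 \<le> s"
      using False Suc.prems(2) \<open>0 \<le> C\<close> by (auto simp: s2_def)
    have "s2 \<le> \<bar>b1\<bar> / (2 * (C + 1) * 3 ^ k)"
      unfolding s2_def by (rule min.cobounded2)
    with \<open>0 \<le> C\<close> have s2_small: "s2 * (2 * (C + 1) * 3 ^ k) \<le> \<bar>b1\<bar>"
      by (simp add: pos_le_divide_eq)
    obtain cs2 where cs2: "fst ` set cs2 \<subseteq> {0<..s2}" "lincomb cs2 (\<lambda>_. 1) = 1"
      "coeff_norm cs2 \<le> 3 ^ k" "\<forall>i<k. lincomb cs2 (\<lambda>t. a t i) = 0"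
      using IH[OF s2(1)] by auto
    have "\<bar>lincomb cs2 (\<lambda>t. a t k)\<bar> \<le> C * s2 * coeff_norm cs2"
      using cs2(1) s2(1) \<open>0 \<le> C\<close> Suc.prems(1) by (intro abs_lincomb_le_small_scales) auto
    also have "\<dots> \<le> (C + 1) * s2 * 3 ^ k"
      using cs2(3) \<open>0 \<le> C\<close> s2(1) by (intro mult_mono) (auto simp: coeff_norm_nonneg)
    also have "\<dots> \<le> \<bar>b1\<bar> / 2"
      using s2_small by (simp add: algebra_simps)
    finally obtain cs where "fst ` set cs = fst ` set cs1 \<union> fst ` set cs2" "lincomb cs (\<lambda>_. 1) = 1"
      "lincomb cs (\<lambda>t. a t k) = 0" "coeff_norm cs \<le> coeff_norm cs1 + 2 * coeff_norm cs2"
      "\<And>g. lincomb cs1 g = 0 \<Longrightarrow> lincomb cs2 g = 0 \<Longrightarrow> lincomb cs g = 0"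
      using lincomb_affine_annihilation[OF cs1(2) cs2(2) False[unfolded b1_def]] b1_def by blast
    with cs1 cs2 s2(2) show ?thesis
      by (intro exI[of _ cs]) (auto simp: less_Suc_eq)
  qed
qed

section \<open>The mode of a strictly unimodal density\<close>

lemma cdf_density_diff:
  fixes d :: "real \<Rightarrow> real"
  assumes cont: "continuous_on UNIV d" and nn: "\<And>x. 0 \<le> d x"
    and prob: "prob_space (density lborel (\<lambda>x. ennreal (d x)))" and "a < b"
  shows "cdf (density lborel (\<lambda>x. ennreal (d x))) b - cdf (density lborel (\<lambda>x. ennreal (d x))) a
    = integral {a..b} d"
proof -
  let ?M = "density lborel (\<lambda>x. ennreal (d x))"
  interpret finite_borel_measure ?M
    using prob by (simp add: finite_borel_measure_def finite_borel_measure_axioms_def prob_space.finite_measure)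
  have [measurable]: "d \<in> borel_measurable borel"
    using cont by (rule borel_measurable_continuous_onI)
  have "(d has_integral integral {a..b} d) {a..b}"
    using cont by (intro integrable_integral integrable_continuous_real) (auto intro: continuous_on_subset)
  then have "(d has_integral integral {a..b} d) {a<..b}"
    by (subst (asm) has_integral_spike_set_eq[of "{a..b}" "{a<..b}"])
      (auto intro: negligible_subset[of "{a}"])
  moreover have "(\<lambda>x. d x * indicator {a<..b} x) = (\<lambda>x. if x \<in> {a<..b} then d x else 0)"
    by (auto simp: indicator_def)
  ultimately have "((\<lambda>x. d x * indicator {a<..b} x) has_integral integral {a..b} d) UNIV"
    using has_integral_restrict_UNIV[of "{a<..b}" d] by simp
  then have "(\<integral>\<^sup>+x. ennreal (d x * indicator {a<..b} x) \<partial>lborel) = integral {a..b} d"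
    by (intro nn_integral_has_integral_lborel) (auto simp: nn)
  then have "emeasure ?M {a<..b} = ennreal (integral {a..b} d)"
    by (subst emeasure_density) (auto simp: ennreal_mult' ennreal_indicator nn)
  moreover have "0 \<le> integral {a..b} d"
    using cont nn by (intro integral_nonneg integrable_continuous_real) (auto intro: continuous_on_subset)
  ultimately have "measure ?M {a<..b} = integral {a..b} d"
    by (simp add: measure_def)
  then show ?thesis
    using cdf_diff_eq[OF \<open>a < b\<close>] by simp
qed

lemma cdf_density_has_real_derivative:
  fixes d :: "real \<Rightarrow> real"
  assumes cont: "continuous_on UNIV d" and nn: "\<And>x. 0 \<le> d x"
    and prob: "prob_space (density lborel (\<lambda>x. ennreal (d x)))"
  shows "(cdf (density lborel (\<lambda>x. ennreal (d x))) has_real_derivative d x) (at x)"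
proof -
  let ?F = "cdf (density lborel (\<lambda>x. ennreal (d x)))"
  have "((\<lambda>u. integral {x - 1..u} d) has_real_derivative d x) (at x within {x - 1..x + 1})"
    using cont by (intro integral_has_real_derivative) (auto intro: continuous_on_subset)
  then have "((\<lambda>u. ?F (x - 1) + integral {x - 1..u} d) has_real_derivative d x) (at x)"
    by (subst (asm) at_within_interior) (auto intro!: derivative_eq_intros)
  moreover have "?F (x - 1) + integral {x - 1..u} d = ?F u" if "u \<in> {x - 1<..<x + 1}" for u
    using cdf_density_diff[OF cont nn prob, of "x - 1" u] that by simp
  ultimately show ?thesis
    using has_field_derivative_transform_within_open[of _ _ x "{x - 1<..<x + 1}"] by simp
qed

lemma modal_midpoints_continuous_cdf:
  assumes "\<And>x. isCont (cdf M) x"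
  shows "modal_midpoints M e = {x. \<forall>y. cdf M (y + e) - cdf M (y - e) \<le> cdf M (x + e) - cdf M (x - e)}"
proof -
  have "Lim (at_left z) (cdf M) = cdf M z" for z
    using assms[of z] by (intro tendsto_Lim) (auto simp: isCont_def intro: tendsto_within_subset)
  then show ?thesis
    unfolding modal_midpoints_def by simp
qed

lemma global_maximizers_in_interval:
  fixes g :: "real \<Rightarrow> real"
  assumes cont: "continuous_on {a..b} g" and "a \<le> b"
    and inc: "\<And>y y'. y < y' \<Longrightarrow> y' \<le> a \<Longrightarrow> g y < g y'"
    and dec: "\<And>y y'. b \<le> y \<Longrightarrow> y < y' \<Longrightarrow> g y' < g y"
  shows "\<exists>x. \<forall>y. g y \<le> g x" and "\<forall>y. g y \<le> g x \<Longrightarrow> x \<in> {a..b}"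
proof -
  obtain x where x: "x \<in> {a..b}" "\<forall>y\<in>{a..b}. g y \<le> g x"
    using continuous_attains_sup[OF _ _ cont] \<open>a \<le> b\<close> by auto
  have "g y \<le> g x" for y
  proof -
    consider "y < a" | "y \<in> {a..b}" | "b < y" by force
    then show ?thesis
    proof cases
      case 1
      have "g a \<le> g x" using x \<open>a \<le> b\<close> by simp
      with inc[of y a] 1 show ?thesis by linarith
    next
      case 3
      have "g b \<le> g x" using x \<open>a \<le> b\<close> by simp
      with dec[of b y] 3 show ?thesis by linarith
    qed (use x in auto)
  qed
  then show "\<exists>x. \<forall>y. g y \<le> g x" by blast
  show "x \<in> {a..b}" if "\<forall>y. g y \<le> g x" for x
    using that inc[of x a] dec[of b x] by (force simp: not_le[symmetric])
qed

lemma
  assumes nonempty: "\<And>e. 0 < e \<Longrightarrow> modal_midpoints M e \<noteq> {}"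
    and near: "\<And>e x. 0 < e \<Longrightarrow> x \<in> modal_midpoints M e \<Longrightarrow> \<bar>x - c\<bar> \<le> e"
  shows unimodal_if_modal_midpoints_converge: "unimodal M"
    and mode_eq_if_modal_midpoints_converge: "mode M = c"
proof -
  have converge: "xs \<longlonglongrightarrow> c" if "\<forall>n. 0 < \<epsilon> n" "\<epsilon> \<longlonglongrightarrow> 0"
    "\<forall>n. xs n \<in> modal_midpoints M (\<epsilon> n)" for \<epsilon> xs
  proof -
    have "norm (xs n - c) \<le> \<epsilon> n" for n
      using near that by simp
    then have "(\<lambda>n. xs n - c) \<longlonglongrightarrow> 0"
      by (intro Lim_null_comparison[OF _ \<open>\<epsilon> \<longlonglongrightarrow> 0\<close>]) auto
    then show ?thesis by (simp add: LIM_zero_iff)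
  qed
  have "is_mode M c"
  proof -
    define \<epsilon> :: "nat \<Rightarrow> real" where "\<epsilon> n = inverse (real (Suc n))" for n
    define xs where "xs n = (SOME x. x \<in> modal_midpoints M (\<epsilon> n))" for n
    have \<epsilon>: "\<forall>n. 0 < \<epsilon> n" "\<epsilon> \<longlonglongrightarrow> 0"
      using LIMSEQ_inverse_real_of_nat by (auto simp: \<epsilon>_def[abs_def])
    then have "\<forall>n. xs n \<in> modal_midpoints M (\<epsilon> n)"
      using nonempty unfolding xs_def by (metis some_in_eq)
    with \<epsilon> converge show ?thesis
      unfolding is_mode_def by blast
  qed
  moreover have "m = c" if "is_mode M m" for m
    using that converge LIMSEQ_unique unfolding is_mode_def by blast
  ultimately have "is_mode M m \<longleftrightarrow> m = c" for m
    by blast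
  then show "unimodal M" "mode M = c"
    unfolding unimodal_def mode_def by auto
qed

lemma
  fixes d :: "real \<Rightarrow> real"
  assumes cont: "continuous_on UNIV d" and nn: "\<And>x. 0 \<le> d x"
    and prob: "prob_space (density lborel (\<lambda>x. ennreal (d x)))"
    and inc: "\<And>x y. x < y \<Longrightarrow> y \<le> c \<Longrightarrow> d x < d y"
    and dec: "\<And>x y. c \<le> x \<Longrightarrow> x < y \<Longrightarrow> d y < d x"
  shows modal_midpoints_unimodal_density_nonempty:
      "0 < e \<Longrightarrow> modal_midpoints (density lborel (\<lambda>x. ennreal (d x))) e \<noteq> {}"
    and modal_midpoints_unimodal_density_near:
      "0 < e \<Longrightarrow> x \<in> modal_midpoints (density lborel (\<lambda>x. ennreal (d x))) e \<Longrightarrow> \<bar>x - c\<bar> \<le> e"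
proof -
  assume "0 < e"
  let ?F = "cdf (density lborel (\<lambda>x. ennreal (d x)))"
  define g where "g y = ?F (y + e) - ?F (y - e)" for y
  note F' = cdf_density_has_real_derivative[OF cont nn prob]
  have g': "(g has_real_derivative d (y + e) - d (y - e)) (at y)" for y
    unfolding g_def by (auto intro!: derivative_eq_intros F'[THEN DERIV_chain2])
  have midpoints: "modal_midpoints (density lborel (\<lambda>x. ennreal (d x))) e = {x. \<forall>y. g y \<le> g x}"
    unfolding g_def using F' DERIV_isCont by (subst modal_midpoints_continuous_cdf) auto
  have g_cont: "continuous_on {c - e..c + e} g"
    using g' by (meson DERIV_isCont continuous_at_imp_continuous_on)
  have g_inc: "g y < g y'" if "y < y'" "y' \<le> c - e" for y y'
    using that \<open>0 < e\<close> g' inc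
    by (intro DERIV_pos_imp_increasing[OF \<open>y < y'\<close>]) (auto intro!: exI simp: diff_gt_0_iff_gt)
  have g_dec: "g y' < g y" if "c + e \<le> y" "y < y'" for y y'
    using that \<open>0 < e\<close> g' dec
    by (intro DERIV_neg_imp_decreasing[OF \<open>y < y'\<close>]) (auto intro!: exI simp: diff_less_0_iff_less)
  note maximizers = global_maximizers_in_interval[OF g_cont _ g_inc g_dec]
  show "modal_midpoints (density lborel (\<lambda>x. ennreal (d x))) e \<noteq> {}"
    using maximizers(1) \<open>0 < e\<close> unfolding midpoints by auto
  show "\<bar>x - c\<bar> \<le> e" if "x \<in> modal_midpoints (density lborel (\<lambda>x. ennreal (d x))) e"
    using maximizers(2)[of x] that \<open>0 < e\<close> unfolding midpoints by auto
qed

lemma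
  fixes d :: "real \<Rightarrow> real"
  assumes "continuous_on UNIV d" and "\<And>x. 0 \<le> d x"
    and "prob_space (density lborel (\<lambda>x. ennreal (d x)))"
    and "\<And>x y. x < y \<Longrightarrow> y \<le> c \<Longrightarrow> d x < d y"
    and "\<And>x y. c \<le> x \<Longrightarrow> x < y \<Longrightarrow> d y < d x"
  shows unimodal_density: "unimodal (density lborel (\<lambda>x. ennreal (d x)))"
    and mode_density: "mode (density lborel (\<lambda>x. ennreal (d x))) = c"
  using unimodal_if_modal_midpoints_converge mode_eq_if_modal_midpoints_converge
    modal_midpoints_unimodal_density_nonempty[OF assms] modal_midpoints_unimodal_density_near[OF assms]
  by blast+

section \<open>Gaussian bumps\<close>

definition gauss :: "real \<Rightarrow> real" where
  "gauss x = exp (- x\<^sup>2) / sqrt pi"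

lemma gauss_eq_normal_density: "gauss = normal_density 0 (1 / sqrt 2)"
  by (auto simp: fun_eq_iff gauss_def normal_density_def power_divide)

lemma gauss_pos: "0 < gauss x"
  by (simp add: gauss_def)

lemma gauss_le: "gauss x \<le> 1 / sqrt pi"
  by (simp add: gauss_def divide_right_mono)

lemma borel_measurable_gauss [measurable]: "gauss \<in> borel_measurable borel"
  unfolding gauss_def by measurable

lemma gauss_has_real_derivative: "(gauss has_real_derivative - 2 * x * gauss x) (at x)"
proof -
  have "((\<lambda>x. exp (- x\<^sup>2) * inverse (sqrt pi)) has_real_derivative
      - 2 * x * exp (- x\<^sup>2) * inverse (sqrt pi)) (at x)"
    by (auto intro!: derivative_eq_intros)
  then show ?thesis
    by (simp add: gauss_def[abs_def] divide_inverse mult.assoc)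
qed

lemma integrable_gauss: "integrable lborel gauss"
  and integral_gauss: "(\<integral>x. gauss x \<partial>lborel) = 1"
  by (simp_all add: gauss_eq_normal_density)

lemma gauss_elementary_funs: "gauss \<in> elementary_funs"
proof -
  have gauss_eq: "gauss = (\<lambda>x. 1 / sqrt pi * exp (- 1 * x * x))"
    by (auto simp: fun_eq_iff gauss_def power2_eq_square)
  show ?thesis
    unfolding gauss_eq by (rule elementary_funs.mult[OF elementary_funs.const elementary_funs.exp[OF
        elementary_funs.mult[OF elementary_funs.mult[OF elementary_funs.const elementary_funs.ident]
        elementary_funs.ident]]])
qed

definition bump :: "real \<Rightarrow> real \<Rightarrow> real" where
  "bump t x = x * exp (- (x\<^sup>2 / t\<^sup>2))"

definition bump' :: "real \<Rightarrow> real \<Rightarrow> real" where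
  "bump' t x = (1 - 2 * x\<^sup>2 / t\<^sup>2) * exp (- (x\<^sup>2 / t\<^sup>2))"

definition bump'' :: "real \<Rightarrow> real \<Rightarrow> real" where
  "bump'' t x = (4 * x ^ 3 / t ^ 4 - 6 * x / t\<^sup>2) * exp (- (x\<^sup>2 / t\<^sup>2))"

lemma bump_has_real_derivative: "t \<noteq> 0 \<Longrightarrow> (bump t has_real_derivative bump' t x) (at x)"
  unfolding bump_def bump'_def
  by (auto intro!: derivative_eq_intros simp: field_simps power2_eq_square)

lemma bump'_has_real_derivative: "t \<noteq> 0 \<Longrightarrow> (bump' t has_real_derivative bump'' t x) (at x)"
  unfolding bump'_def bump''_def
  by (auto intro!: derivative_eq_intros simp: field_simps power2_eq_square power3_eq_cube power4_eq_xxxx)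

lemma borel_measurable_bump [measurable]: "bump t \<in> borel_measurable borel"
  unfolding bump_def by measurable

lemma bump_elementary_funs: "bump t \<in> elementary_funs"
proof -
  have bump_eq: "bump t = (\<lambda>x. x * exp ((- 1 / t\<^sup>2) * x * x))"
    by (auto simp: fun_eq_iff bump_def power2_eq_square)
  show ?thesis
    unfolding bump_eq by (rule elementary_funs.mult[OF elementary_funs.ident elementary_funs.exp[OF
        elementary_funs.mult[OF elementary_funs.mult[OF elementary_funs.const elementary_funs.ident]
        elementary_funs.ident]]])
qed

lemma abs_mult_exp_neg_square_le:
  fixes p y :: real
  assumes "2 * \<bar>p\<bar> \<le> K * (2 + 2 * y\<^sup>2 + y ^ 4)"
  shows "\<bar>p\<bar> * exp (- y\<^sup>2) \<le> K"
proof -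
  have "2 + 2 * y\<^sup>2 + y ^ 4 \<le> 2 * exp (y\<^sup>2)"
    using exp_lower_Taylor_quadratic[of "y\<^sup>2"] by (simp add: power2_eq_square power4_eq_xxxx)
  moreover have "0 \<le> K"
  proof -
    have "0 \<le> K * (2 + 2 * y\<^sup>2 + y ^ 4)"
      using assms abs_ge_zero[of p] by linarith
    moreover have "0 < 2 + 2 * y\<^sup>2 + y ^ 4"
      by (simp add: add_pos_nonneg)
    ultimately show ?thesis
      by (simp add: zero_le_mult_iff)
  qed
  ultimately have "2 * \<bar>p\<bar> \<le> K * (2 * exp (y\<^sup>2))"
    using assms by (meson mult_left_mono order_trans)
  then show ?thesis
    by (simp add: exp_minus field_simps)
qed

lemma abs_le_square_bounds:
  fixes y :: real
  shows "2 * \<bar>y\<bar> \<le> 1 + y\<^sup>2" and "2 * \<bar>y\<bar> ^ 3 \<le> y\<^sup>2 + y ^ 4"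
proof -
  have "0 \<le> (\<bar>y\<bar> - 1)\<^sup>2" by simp
  then show *: "2 * \<bar>y\<bar> \<le> 1 + y\<^sup>2"
    by (simp add: power2_eq_square algebra_simps)
  have "2 * \<bar>y\<bar> ^ 3 = 2 * \<bar>y\<bar> * y\<^sup>2"
    by (simp add: power2_eq_square power3_eq_cube)
  also have "\<dots> \<le> (1 + y\<^sup>2) * y\<^sup>2"
    using * by (rule mult_right_mono) simp
  finally show "2 * \<bar>y\<bar> ^ 3 \<le> y\<^sup>2 + y ^ 4"
    by (simp add: power2_eq_square power4_eq_xxxx algebra_simps)
qed

lemma
  assumes "0 < t"
  shows abs_bump_le: "\<bar>bump t x\<bar> \<le> t"
    and abs_mult_bump'_le: "\<bar>x * bump' t x\<bar> \<le> 4 * t"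
    and abs_bump''_le: "\<bar>bump'' t x\<bar> \<le> 8 / t"
proof -
  define y where "y = x / t"
  have x: "x = t * y"
    using assms by (simp add: y_def)
  have exponent: "x\<^sup>2 / t\<^sup>2 = y\<^sup>2"
    using assms by (simp add: x power_mult_distrib)
  have "0 \<le> y ^ 4"
    by simp
  note y = abs_le_square_bounds[of y] zero_le_power2[of y] this
  have "\<bar>y\<bar> * exp (- y\<^sup>2) \<le> 1"
    using y by (intro abs_mult_exp_neg_square_le) argo
  moreover have "bump t x = t * (y * exp (- y\<^sup>2))"
    unfolding bump_def exponent by (simp add: x)
  ultimately show "\<bar>bump t x\<bar> \<le> t"
    using assms by (simp add: abs_mult mult_left_le)
  have "\<bar>y - 2 * y ^ 3\<bar> \<le> \<bar>y\<bar> + 2 * \<bar>y\<bar> ^ 3"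
    using abs_triangle_ineq4[of y "2 * y ^ 3"] by (simp add: abs_mult power_abs)
  then have "\<bar>y - 2 * y ^ 3\<bar> * exp (- y\<^sup>2) \<le> 4"
    using y by (intro abs_mult_exp_neg_square_le) argo
  moreover have "x * bump' t x = t * ((y - 2 * y ^ 3) * exp (- y\<^sup>2))"
    unfolding bump'_def exponent by (simp add: x algebra_simps power2_eq_square power3_eq_cube)
  ultimately show "\<bar>x * bump' t x\<bar> \<le> 4 * t"
    using assms by (simp add: abs_mult mult.commute mult_left_mono)
  have "\<bar>4 * y ^ 3 - 6 * y\<bar> \<le> 4 * \<bar>y\<bar> ^ 3 + 6 * \<bar>y\<bar>"
    using abs_triangle_ineq4[of "4 * y ^ 3" "6 * y"] by (simp add: abs_mult power_abs)
  then have "\<bar>4 * y ^ 3 - 6 * y\<bar> * exp (- y\<^sup>2) \<le> 8"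
    using y by (intro abs_mult_exp_neg_square_le) argo
  moreover have "bump'' t x = (4 * y ^ 3 - 6 * y) * exp (- y\<^sup>2) / t"
    unfolding bump''_def exponent using assms
    by (simp add: x field_simps power2_eq_square power3_eq_cube power4_eq_xxxx)
  ultimately show "\<bar>bump'' t x\<bar> \<le> 8 / t"
    using assms by (simp add: abs_mult divide_right_mono)
qed

lemma integral_gauss_mult_bump: "(\<integral>x. gauss x * bump t x \<partial>lborel) = 0"
proof -
  have "(\<integral>x. gauss x * bump t x \<partial>lborel)
      = \<bar>-1\<bar> *\<^sub>R (\<integral>x. gauss (0 + -1 * x) * bump t (0 + -1 * x) \<partial>lborel)"
    by (rule lborel_integral_real_affine) simp
  also have "\<dots> = - (\<integral>x. gauss x * bump t x \<partial>lborel)"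
    by (simp add: gauss_def bump_def)
  finally show ?thesis by simp
qed

lemma abs_mult_bump_le: "0 < t \<Longrightarrow> \<bar>a * bump t x\<bar> \<le> t * \<bar>a\<bar>"
  using mult_left_mono[OF abs_bump_le[of t x] abs_ge_zero[of a]] by (simp add: abs_mult mult.commute)

lemma integrable_gauss_mult_bump:
  assumes W: "integrable lborel (\<lambda>x. gauss x * W x)" and "0 < t"
  shows "integrable lborel (\<lambda>x. gauss x * W x * bump t x)"
proof (rule Bochner_Integration.integrable_bound)
  show "integrable lborel (\<lambda>x. t * \<bar>gauss x * W x\<bar>)"
    using W by (intro integrable_mult_right integrable_abs)
  show "(\<lambda>x. gauss x * W x * bump t x) \<in> borel_measurable lborel"
    using borel_measurable_integrable[OF W] by measurable
  show "AE x in lborel. norm (gauss x * W x * bump t x) \<le> norm (t * \<bar>gauss x * W x\<bar>)"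
  proof (rule AE_I2)
    fix x
    show "norm (gauss x * W x * bump t x) \<le> norm (t * \<bar>gauss x * W x\<bar>)"
      using abs_mult_bump_le[OF \<open>0 < t\<close>, of "gauss x * W x" x] \<open>0 < t\<close> by simp
  qed
qed

lemma abs_integral_gauss_mult_bump_le:
  assumes W: "integrable lborel (\<lambda>x. gauss x * W x)" and "0 < t"
  shows "\<bar>\<integral>x. gauss x * W x * bump t x \<partial>lborel\<bar> \<le> t * (\<integral>x. \<bar>gauss x * W x\<bar> \<partial>lborel)"
proof -
  have "\<bar>\<integral>x. gauss x * W x * bump t x \<partial>lborel\<bar> \<le> (\<integral>x. \<bar>gauss x * W x * bump t x\<bar> \<partial>lborel)"
    by (rule integral_abs_bound)
  also have "\<dots> \<le> (\<integral>x. t * \<bar>gauss x * W x\<bar> \<partial>lborel)"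
    using integrable_gauss_mult_bump[OF assms] W abs_mult_bump_le[OF \<open>0 < t\<close>]
    by (intro integral_mono) auto
  finally show ?thesis by simp
qed

section \<open>Perturbed Gaussian densities\<close>

definition perturbation :: "(real \<times> real) list \<Rightarrow> real \<Rightarrow> real" where
  "perturbation cs x = lincomb cs (\<lambda>t. bump t x)"

text \<open>The bound \<open>1 / 40\<close> keeps the perturbation within \<open>1 / 40\<close> of \<open>0\<close> and the derivative of
  \<open>perturbed_slope\<close> below \<open>- 2 + 18 / 40 < - 1\<close>.\<close>
definition small_perturbation :: "(real \<times> real) list \<Rightarrow> bool" where
  "small_perturbation cs \<longleftrightarrow> fst ` set cs \<subseteq> {0<..1} \<and> scaled_coeff_norm cs \<le> 1 / 40"

definition perturbed_density :: "(real \<times> real) list \<Rightarrow> real \<Rightarrow> real" where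
  "perturbed_density cs x = gauss x * (1 + perturbation cs x)"

definition perturbed_measure :: "(real \<times> real) list \<Rightarrow> real measure" where
  "perturbed_measure cs = density lborel (\<lambda>x. ennreal (perturbed_density cs x))"

definition perturbed_slope :: "(real \<times> real) list \<Rightarrow> real \<Rightarrow> real" where
  "perturbed_slope cs x = - 2 * x * (1 + perturbation cs x) + lincomb cs (\<lambda>t. bump' t x)"

lemma perturbed_density_Nil [simp]: "perturbed_density [] = gauss"
  by (simp add: fun_eq_iff perturbed_density_def perturbation_def)

lemma perturbed_slope_0: "perturbed_slope cs 0 = lincomb cs (\<lambda>_. 1)"
  by (simp add: perturbed_slope_def bump'_def)

lemma perturbation_has_real_derivative:
  "0 \<notin> fst ` set cs \<Longrightarrow> (perturbation cs has_real_derivative lincomb cs (\<lambda>t. bump' t x)) (at x)"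
  unfolding perturbation_def[abs_def]
  by (rule has_real_derivative_lincomb) (auto intro: bump_has_real_derivative)

lemma perturbed_density_has_real_derivative:
  "0 \<notin> fst ` set cs \<Longrightarrow> (perturbed_density cs has_real_derivative gauss x * perturbed_slope cs x) (at x)"
  unfolding perturbed_density_def[abs_def] perturbed_slope_def
  by (auto intro!: derivative_eq_intros gauss_has_real_derivative perturbation_has_real_derivative
      simp: algebra_simps)

lemma perturbed_slope_has_real_derivative:
  "0 \<notin> fst ` set cs \<Longrightarrow> (perturbed_slope cs has_real_derivative
     - 2 - 2 * perturbation cs x - 2 * (x * lincomb cs (\<lambda>t. bump' t x)) + lincomb cs (\<lambda>t. bump'' t x))
   (at x)"
  unfolding perturbed_slope_def[abs_def]
  by (auto intro!: derivative_eq_intros perturbation_has_real_derivative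
      has_real_derivative_lincomb[of _ "bump'" "bump''"] bump'_has_real_derivative
      simp: algebra_simps)

lemma
  assumes "fst ` set cs \<subseteq> {0<..1}"
  shows abs_perturbation_le: "\<bar>perturbation cs x\<bar> \<le> scaled_coeff_norm cs"
    and abs_mult_lincomb_bump'_le: "\<bar>x * lincomb cs (\<lambda>t. bump' t x)\<bar> \<le> 4 * scaled_coeff_norm cs"
    and abs_lincomb_bump''_le: "\<bar>lincomb cs (\<lambda>t. bump'' t x)\<bar> \<le> 8 * scaled_coeff_norm cs"
proof -
  have t: "0 < t" "t \<le> 1 / t" if "t \<in> fst ` set cs" for t
    using assms that by (auto simp: pos_le_divide_eq mult_le_one)
  have "\<bar>bump t x\<bar> \<le> 1 / t" if "t \<in> fst ` set cs" for t
    using abs_bump_le[of t x] t[OF that] by linarith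
  then show "\<bar>perturbation cs x\<bar> \<le> scaled_coeff_norm cs"
    unfolding perturbation_def using abs_lincomb_le_scaled_coeff_norm[of cs _ 1] by simp
  have "\<bar>x * bump' t x\<bar> \<le> 4 / t" if "t \<in> fst ` set cs" for t
    using abs_mult_bump'_le[of t x] t[OF that] by simp
  then show "\<bar>x * lincomb cs (\<lambda>t. bump' t x)\<bar> \<le> 4 * scaled_coeff_norm cs"
    using abs_lincomb_le_scaled_coeff_norm[of cs "\<lambda>t. x * bump' t x" 4] by (simp add: lincomb_const_mult)
  show "\<bar>lincomb cs (\<lambda>t. bump'' t x)\<bar> \<le> 8 * scaled_coeff_norm cs"
    using abs_bump''_le t by (intro abs_lincomb_le_scaled_coeff_norm) blast
qed

lemma small_perturbation_scales:
  "small_perturbation cs \<Longrightarrow> fst ` set cs \<subseteq> {0<..1}"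
  "small_perturbation cs \<Longrightarrow> 0 \<notin> fst ` set cs"
  by (auto simp: small_perturbation_def)

lemma perturbed_slope_decreasing:
  assumes small: "small_perturbation cs" and "x < y"
  shows "perturbed_slope cs y \<le> perturbed_slope cs x - (y - x)"
proof -
  define D where "D z = - 2 - 2 * perturbation cs z - 2 * (z * lincomb cs (\<lambda>t. bump' t z))
    + lincomb cs (\<lambda>t. bump'' t z)" for z
  obtain z where "perturbed_slope cs y - perturbed_slope cs x = (y - x) * D z"
    using MVT2[OF \<open>x < y\<close>, of "perturbed_slope cs" D] small_perturbation_scales(2)[OF small]
      perturbed_slope_has_real_derivative unfolding D_def by blast
  moreover have "D z \<le> - 1"
  proof -
    have scales: "fst ` set cs \<subseteq> {0<..1}" and "scaled_coeff_norm cs \<le> 1 / 40"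
      using small by (auto simp: small_perturbation_def)
    then show ?thesis
      using abs_perturbation_le[OF scales, of z] abs_mult_lincomb_bump'_le[OF scales, of z]
        abs_lincomb_bump''_le[OF scales, of z]
      unfolding D_def abs_le_iff by argo
  qed
  moreover have "(y - x) * D z \<le> (y - x) * (- 1)"
    using \<open>x < y\<close> \<open>D z \<le> - 1\<close> by (intro mult_left_mono) auto
  ultimately show ?thesis
    by simp
qed

lemma perturbed_slope_sign_change:
  assumes small: "small_perturbation cs"
  obtains c where "\<And>x. x < c \<Longrightarrow> 0 < perturbed_slope cs x" "\<And>x. c < x \<Longrightarrow> perturbed_slope cs x < 0"
    and "sgn c = sgn (lincomb cs (\<lambda>_. 1))"
proof -
  let ?u = "perturbed_slope cs"
  note decreasing = perturbed_slope_decreasing[OF small]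
  define R where "R = \<bar>?u 0\<bar> + 1"
  have R: "0 < R" "?u 0 \<le> R" "- R \<le> ?u 0"
    by (auto simp: R_def)
  have "?u R \<le> 0" "0 \<le> ?u (- R)"
    using decreasing[of 0 R] decreasing[of "- R" 0] R by auto
  moreover have "isCont ?u x" for x
    using perturbed_slope_has_real_derivative small_perturbation_scales(2)[OF small] DERIV_isCont
    by blast
  ultimately obtain c where c: "?u c = 0"
    using IVT2[of ?u R 0 "- R"] R(1) by force
  have pos: "0 < ?u x" if "x < c" for x
    using decreasing[OF that] c that by simp
  have neg: "?u x < 0" if "c < x" for x
    using decreasing[OF that] c that by simp
  have "sgn c = sgn (?u 0)"
    using pos[of 0] neg[of 0] c by (cases c "0 :: real" rule: linorder_cases) auto
  then have "sgn c = sgn (lincomb cs (\<lambda>_. 1))"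
    by (simp add: perturbed_slope_0)
  with pos neg show ?thesis
    by (rule that)
qed

lemma abs_perturbation_le_small: "small_perturbation cs \<Longrightarrow> \<bar>perturbation cs x\<bar> \<le> 1 / 40"
  using abs_perturbation_le[of cs x] by (auto simp: small_perturbation_def)

lemma
  assumes "small_perturbation cs"
  shows perturbed_density_pos: "0 < perturbed_density cs x"
    and perturbed_density_le: "perturbed_density cs x \<le> 1 / sqrt pi * 2"
proof -
  have "0 < 1 + perturbation cs x" "1 + perturbation cs x \<le> 2"
    using abs_perturbation_le_small[OF assms, of x] unfolding abs_le_iff by argo+
  then show "0 < perturbed_density cs x" "perturbed_density cs x \<le> 1 / sqrt pi * 2"
    unfolding perturbed_density_def using gauss_pos[of x] gauss_le[of x]
    by (simp, intro mult_mono) simp_all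
qed

lemma continuous_on_perturbed_density:
  "0 \<notin> fst ` set cs \<Longrightarrow> continuous_on S (perturbed_density cs)"
  by (intro continuous_at_imp_continuous_on ballI DERIV_isCont[OF perturbed_density_has_real_derivative])

lemma perturbed_density_elementary_funs: "perturbed_density cs \<in> elementary_funs"
proof -
  have "perturbation cs \<in> elementary_funs"
    unfolding perturbation_def[abs_def] by (rule lincomb_elementary_funs) (rule bump_elementary_funs)
  then show ?thesis
    unfolding perturbed_density_def[abs_def]
    by (rule elementary_funs.mult[OF gauss_elementary_funs elementary_funs.add[OF elementary_funs.const]])
qed

lemma perturbed_density_unimodal_shape:
  assumes small: "small_perturbation cs"
  obtains c where "\<And>x y. x < y \<Longrightarrow> y \<le> c \<Longrightarrow> perturbed_density cs x < perturbed_density cs y"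
    and "\<And>x y. c \<le> x \<Longrightarrow> x < y \<Longrightarrow> perturbed_density cs y < perturbed_density cs x"
    and "sgn c = sgn (lincomb cs (\<lambda>_. 1))"
proof -
  obtain c where pos: "\<And>x. x < c \<Longrightarrow> 0 < perturbed_slope cs x"
    and neg: "\<And>x. c < x \<Longrightarrow> perturbed_slope cs x < 0" and "sgn c = sgn (lincomb cs (\<lambda>_. 1))"
    using perturbed_slope_sign_change[OF small] by blast
  note deriv = perturbed_density_has_real_derivative[OF small_perturbation_scales(2)[OF small]]
  note cont = continuous_on_perturbed_density[OF small_perturbation_scales(2)[OF small]]
  have "perturbed_density cs x < perturbed_density cs y" if "x < y" "y \<le> c" for x y
  proof (rule DERIV_pos_imp_increasing_open[OF \<open>x < y\<close> _ cont])
    fix z assume "x < z" "z < y"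
    with that have "0 < gauss z * perturbed_slope cs z"
      using pos[of z] gauss_pos[of z] by simp
    with deriv show "\<exists>D. (perturbed_density cs has_real_derivative D) (at z) \<and> 0 < D"
      by blast
  qed
  moreover have "perturbed_density cs y < perturbed_density cs x" if "c \<le> x" "x < y" for x y
  proof (rule DERIV_neg_imp_decreasing_open[OF \<open>x < y\<close> _ cont])
    fix z assume "x < z" "z < y"
    with that have "gauss z * perturbed_slope cs z < 0"
      using neg[of z] gauss_pos[of z] by (simp add: mult_pos_neg)
    with deriv show "\<exists>D. (perturbed_density cs has_real_derivative D) (at z) \<and> D < 0"
      by blast
  qed
  ultimately show ?thesis
    using \<open>sgn c = _\<close> by (rule that)
qed

lemma
  assumes W: "integrable lborel (\<lambda>x. gauss x * W x)" and scales: "fst ` set cs \<subseteq> {0<..}"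
  shows integrable_gauss_mult_perturbation: "integrable lborel (\<lambda>x. gauss x * W x * perturbation cs x)"
    and integral_gauss_mult_perturbation: "(\<integral>x. gauss x * W x * perturbation cs x \<partial>lborel)
      = lincomb cs (\<lambda>t. \<integral>x. gauss x * W x * bump t x \<partial>lborel)"
proof -
  have "integrable lborel (\<lambda>x. gauss x * W x * perturbation cs x) \<and>
    (\<integral>x. gauss x * W x * perturbation cs x \<partial>lborel) = lincomb cs (\<lambda>t. \<integral>x. gauss x * W x * bump t x \<partial>lborel)"
    using scales
  proof (induction cs)
    case Nil
    then show ?case by (simp add: perturbation_def)
  next
    case (Cons tc cs)
    obtain t c where tc: "tc = (t, c)" by force
    with Cons.prems have "0 < t" by auto
    then have "integrable lborel (\<lambda>x. c * (gauss x * W x * bump t x))"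
      using integrable_gauss_mult_bump[OF W] by simp
    moreover have "(\<lambda>x. gauss x * W x * perturbation (tc # cs) x)
        = (\<lambda>x. c * (gauss x * W x * bump t x) + gauss x * W x * perturbation cs x)"
      by (auto simp: fun_eq_iff tc perturbation_def algebra_simps)
    ultimately show ?case
      using Cons by (simp add: tc)
  qed
  then show "integrable lborel (\<lambda>x. gauss x * W x * perturbation cs x)"
    "(\<integral>x. gauss x * W x * perturbation cs x \<partial>lborel) = lincomb cs (\<lambda>t. \<integral>x. gauss x * W x * bump t x \<partial>lborel)"
    by auto
qed

lemma
  assumes scales: "fst ` set cs \<subseteq> {0<..}"
  shows integrable_perturbed_density: "integrable lborel (perturbed_density cs)"
    and integral_perturbed_density: "(\<integral>x. perturbed_density cs x \<partial>lborel) = 1"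
proof -
  have gauss: "integrable lborel (\<lambda>x. gauss x * 1)"
    using integrable_gauss by simp
  note perturbation = integrable_gauss_mult_perturbation[OF gauss scales]
    integral_gauss_mult_perturbation[OF gauss scales]
  have "perturbed_density cs = (\<lambda>x. gauss x + gauss x * perturbation cs x)"
    by (auto simp: fun_eq_iff perturbed_density_def algebra_simps)
  then show "integrable lborel (perturbed_density cs)" "(\<integral>x. perturbed_density cs x \<partial>lborel) = 1"
    using perturbation integrable_gauss integral_gauss integral_gauss_mult_bump by simp_all
qed

lemma small_perturbation_Nil [simp]: "small_perturbation []"
  by (simp add: small_perturbation_def scaled_coeff_norm_def)

lemma borel_measurable_perturbed_density:
  "0 \<notin> fst ` set cs \<Longrightarrow> perturbed_density cs \<in> borel_measurable borel"
  by (rule borel_measurable_continuous_onI[OF continuous_on_perturbed_density])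

lemma prob_space_perturbed_measure:
  assumes small: "small_perturbation cs"
  shows "prob_space (perturbed_measure cs)"
proof
  have scales: "fst ` set cs \<subseteq> {0<..}" "0 \<notin> fst ` set cs"
    using small_perturbation_scales[OF small] by auto
  note [measurable] = borel_measurable_perturbed_density[OF scales(2)]
  have "emeasure (perturbed_measure cs) UNIV = (\<integral>\<^sup>+x. ennreal (perturbed_density cs x) \<partial>lborel)"
    by (simp add: perturbed_measure_def emeasure_density)
  also have "\<dots> = ennreal (\<integral>x. perturbed_density cs x \<partial>lborel)"
    using integrable_perturbed_density[OF scales(1)] perturbed_density_pos[OF small]
    by (intro nn_integral_eq_integral) (auto simp: less_imp_le)
  finally show "emeasure (perturbed_measure cs) (space (perturbed_measure cs)) = 1"
    by (simp add: integral_perturbed_density[OF scales(1)] perturbed_measure_def)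
qed

lemma
  assumes small: "small_perturbation cs"
  shows perturbed_measure_in_mode_class: "perturbed_measure cs \<in> mode_class"
    and sgn_mode_perturbed_measure: "sgn (mode (perturbed_measure cs)) = sgn (lincomb cs (\<lambda>_. 1))"
proof -
  obtain c where inc: "\<And>x y. x < y \<Longrightarrow> y \<le> c \<Longrightarrow> perturbed_density cs x < perturbed_density cs y"
    and dec: "\<And>x y. c \<le> x \<Longrightarrow> x < y \<Longrightarrow> perturbed_density cs y < perturbed_density cs x"
    and sgn_c: "sgn c = sgn (lincomb cs (\<lambda>_. 1))"
    using perturbed_density_unimodal_shape[OF small] by blast
  have cont: "continuous_on UNIV (perturbed_density cs)"
    using continuous_on_perturbed_density small_perturbation_scales(2)[OF small] by blast
  have nn: "\<And>x. 0 \<le> perturbed_density cs x"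
    using perturbed_density_pos[OF small] by (simp add: less_imp_le)
  have prob: "prob_space (density lborel (\<lambda>x. ennreal (perturbed_density cs x)))"
    using prob_space_perturbed_measure[OF small] by (simp add: perturbed_measure_def)
  have "unimodal (perturbed_measure cs)" "mode (perturbed_measure cs) = c"
    unfolding perturbed_measure_def
    using unimodal_density[OF cont nn prob inc dec] mode_density[OF cont nn prob inc dec] by auto
  moreover have "bounded (range (perturbed_density cs))"
    using perturbed_density_le[OF small] nn by (intro boundedI[where B = "1 / sqrt pi * 2"]) auto
  then have "has_smooth_bounded_density (perturbed_measure cs)"
    unfolding has_smooth_bounded_density_def perturbed_measure_def
    using smooth_fun_elementary[OF perturbed_density_elementary_funs] nn by blast
  ultimately show "perturbed_measure cs \<in> mode_class" "sgn (mode (perturbed_measure cs)) = sgn (lincomb cs (\<lambda>_. 1))"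
    using prob_space_perturbed_measure[OF small] sgn_c
    by (auto simp: mode_class_def perturbed_measure_def)
qed

lemma integrable_gauss_mult:
  assumes "integrable (perturbed_measure []) W"
  shows "integrable lborel (\<lambda>x. gauss x * W x)"
  using assms borel_measurable_integrable[OF assms] gauss_pos integrable_density[of W lborel gauss]
  by (simp add: perturbed_measure_def less_imp_le)

lemma integral_perturbed_measure:
  assumes small: "small_perturbation cs" and W: "integrable (perturbed_measure []) W"
  shows "(\<integral>y. W y \<partial>perturbed_measure cs)
    = (\<integral>y. W y \<partial>perturbed_measure []) + lincomb cs (\<lambda>t. \<integral>x. gauss x * W x * bump t x \<partial>lborel)"
proof -
  have W_meas: "W \<in> borel_measurable lborel"
    using borel_measurable_integrable[OF W] by (simp add: perturbed_measure_def)
  have integral_eq: "(\<integral>y. W y \<partial>perturbed_measure ds) = (\<integral>x. perturbed_density ds x * W x \<partial>lborel)"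
    if "small_perturbation ds" for ds
    using W_meas perturbed_density_pos[OF that] borel_measurable_perturbed_density small_perturbation_scales(2)[OF that]
    unfolding perturbed_measure_def by (subst integral_density) (auto simp: less_imp_le)
  note gauss_W = integrable_gauss_mult[OF W]
  have scales: "fst ` set cs \<subseteq> {0<..}"
    using small_perturbation_scales(1)[OF small] by auto
  have "(\<lambda>x. perturbed_density cs x * W x) = (\<lambda>x. gauss x * W x + gauss x * W x * perturbation cs x)"
    by (auto simp: fun_eq_iff perturbed_density_def algebra_simps)
  then show ?thesis
    using integral_eq[OF small] integral_eq[of "[]"] gauss_W
      integrable_gauss_mult_perturbation[OF gauss_W scales] integral_gauss_mult_perturbation[OF gauss_W scales]
    by simp
qed

section \<open>Identifiable properties do not determine the mode\<close>

lemma small_perturbation_rescale: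
  assumes "fst ` set cs \<subseteq> {0<..1}"
  shows "small_perturbation (scale_coeffs (1 / (40 * (scaled_coeff_norm cs + 1))) cs)"
proof -
  have norm: "0 \<le> scaled_coeff_norm cs"
    using assms by (intro scaled_coeff_norm_nonneg) auto
  then have "scaled_coeff_norm cs / (40 * (scaled_coeff_norm cs + 1)) \<le> 1 / 40"
    by (simp add: field_simps)
  with norm assms show ?thesis
    by (simp add: small_perturbation_def)
qed

lemma integrals_gauss_mult_bump_linear_bound:
  fixes W :: "nat \<Rightarrow> real \<Rightarrow> real"
  assumes W: "\<And>i. i < k \<Longrightarrow> integrable lborel (\<lambda>x. gauss x * W i x)"
  obtains C where "0 \<le> C"
    and "\<forall>t\<in>{0<..1}. \<forall>i<k. \<bar>\<integral>x. gauss x * W i x * bump t x \<partial>lborel\<bar> \<le> C * t"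
proof
  define C where "C = (\<Sum>i<k. \<integral>x. \<bar>gauss x * W i x\<bar> \<partial>lborel)"
  show "0 \<le> C"
    unfolding C_def by (intro sum_nonneg integral_nonneg_AE) auto
  show "\<forall>t\<in>{0<..1}. \<forall>i<k. \<bar>\<integral>x. gauss x * W i x * bump t x \<partial>lborel\<bar> \<le> C * t"
  proof (intro ballI allI impI)
    fix t :: real and i assume "t \<in> {0<..1}" "i < k"
    then have "\<bar>\<integral>x. gauss x * W i x * bump t x \<partial>lborel\<bar> \<le> t * (\<integral>x. \<bar>gauss x * W i x\<bar> \<partial>lborel)"
      using abs_integral_gauss_mult_bump_le[OF W] by simp
    also have "\<dots> \<le> t * C"
      unfolding C_def using \<open>t \<in> {0<..1}\<close> \<open>i < k\<close>
      by (intro mult_left_mono member_le_sum) (auto intro: integral_nonneg_AE)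
    finally show "\<bar>\<integral>x. gauss x * W i x * bump t x \<partial>lborel\<bar> \<le> C * t"
      by (simp add: mult.commute)
  qed
qed

lemma exists_perturbation_preserving_integrals:
  fixes W :: "nat \<Rightarrow> real \<Rightarrow> real"
  assumes W: "\<And>i. i < k \<Longrightarrow> integrable (perturbed_measure []) (W i)"
  obtains cs where "small_perturbation cs" and "0 < lincomb cs (\<lambda>_. 1)"
    and "\<And>i. i < k \<Longrightarrow> (\<integral>y. W i y \<partial>perturbed_measure cs) = (\<integral>y. W i y \<partial>perturbed_measure [])"
proof -
  note gauss_W = integrable_gauss_mult[OF W]
  define a where "a t i = (\<integral>x. gauss x * W i x * bump t x \<partial>lborel)" for t i
  obtain C where "0 \<le> C" and "\<forall>t\<in>{0<..1}. \<forall>i<k. \<bar>a t i\<bar> \<le> C * t"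
    unfolding a_def by (rule integrals_gauss_mult_bump_linear_bound[OF gauss_W])
  then obtain cs where scales: "fst ` set cs \<subseteq> {0<..1}" and weight: "lincomb cs (\<lambda>_. 1) = 1"
    and annihilates: "\<forall>i<k. lincomb cs (\<lambda>t. a t i) = 0"
    using exists_lincomb_annihilating[of C k a 1] by auto
  define ds where "ds = scale_coeffs (1 / (40 * (scaled_coeff_norm cs + 1))) cs"
  have small: "small_perturbation ds"
    unfolding ds_def using scales by (rule small_perturbation_rescale)
  moreover have "0 < lincomb ds (\<lambda>_. 1)"
  proof -
    have "0 \<le> scaled_coeff_norm cs"
      using scales by (intro scaled_coeff_norm_nonneg) auto
    with weight show ?thesis
      by (simp add: ds_def)
  qed
  moreover have "(\<integral>y. W i y \<partial>perturbed_measure ds) = (\<integral>y. W i y \<partial>perturbed_measure [])" if "i < k" for i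
  proof -
    have "lincomb ds (\<lambda>t. a t i) = 0"
      using annihilates that unfolding ds_def lincomb_scale_coeffs by simp
    then show ?thesis
      using integral_perturbed_measure[OF small W[OF that]] unfolding a_def by linarith
  qed
  ultimately show ?thesis
    by (rule that)
qed

lemma identifiable_level_set:
  assumes "identifiable Ps \<Gamma> k" and "\<Gamma> P \<in> Rk k"
  shows "\<exists>W :: nat \<Rightarrow> 'a \<Rightarrow> real. (\<forall>Q\<in>Ps. \<forall>i<k. integrable Q (W i))
    \<and> (\<forall>Q\<in>Ps. \<Gamma> Q = \<Gamma> P \<longleftrightarrow> (\<forall>i<k. (\<integral>y. W i y \<partial>Q) = 0))"
proof -
  obtain V :: "(nat \<Rightarrow> real) \<Rightarrow> 'a \<Rightarrow> nat \<Rightarrow> real" where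
    "\<forall>Q\<in>Ps. \<forall>r\<in>Rk k. \<forall>i<k. integrable Q (\<lambda>y. V r y i)"
    "\<forall>Q\<in>Ps. \<forall>r\<in>Rk k. \<Gamma> Q = r \<longleftrightarrow> (\<forall>i<k. (\<integral>y. V r y i \<partial>Q) = 0)"
    using assms(1) unfolding identifiable_def by blast
  with \<open>\<Gamma> P \<in> Rk k\<close> show ?thesis
    by (intro exI[of _ "\<lambda>i y. V (\<Gamma> P) y i"]) auto
qed

lemma identifiable_property_merges_modes:
  assumes ident: "identifiable mode_class \<Gamma> k" and in_Rk: "\<forall>P\<in>mode_class. \<Gamma> P \<in> Rk k"
  shows "\<exists>P\<in>mode_class. \<exists>Q\<in>mode_class. \<Gamma> P = \<Gamma> Q \<and> mode P \<noteq> mode Q"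
proof -
  define P0 where "P0 = perturbed_measure []"
  have P0: "P0 \<in> mode_class"
    unfolding P0_def by (rule perturbed_measure_in_mode_class) simp
  obtain W :: "nat \<Rightarrow> real \<Rightarrow> real" where W_int: "\<forall>Q\<in>mode_class. \<forall>i<k. integrable Q (W i)"
    and level_set: "\<forall>Q\<in>mode_class. \<Gamma> Q = \<Gamma> P0 \<longleftrightarrow> (\<forall>i<k. (\<integral>y. W i y \<partial>Q) = 0)"
    using identifiable_level_set[OF ident bspec[OF in_Rk P0]] by blast
  obtain cs where small: "small_perturbation cs" and weight: "0 < lincomb cs (\<lambda>_. 1)"
    and same_integrals: "\<And>i. i < k \<Longrightarrow> (\<integral>y. W i y \<partial>perturbed_measure cs) = (\<integral>y. W i y \<partial>P0)"
    using exists_perturbation_preserving_integrals[of k W] W_int P0 unfolding P0_def by blast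
  define P1 where "P1 = perturbed_measure cs"
  have P1: "P1 \<in> mode_class"
    unfolding P1_def by (rule perturbed_measure_in_mode_class[OF small])
  have "\<forall>i<k. (\<integral>y. W i y \<partial>P0) = 0"
    using level_set P0 by blast
  then have "\<forall>i<k. (\<integral>y. W i y \<partial>P1) = 0"
    using same_integrals unfolding P1_def by simp
  then have "\<Gamma> P1 = \<Gamma> P0"
    using level_set P1 by blast
  moreover have "sgn (mode P1) = 1" "sgn (mode P0) = 0"
    using sgn_mode_perturbed_measure[OF small] sgn_mode_perturbed_measure[OF small_perturbation_Nil] weight
    unfolding P0_def P1_def by simp_all
  ultimately show ?thesis
    using P0 P1 by (metis one_neq_zero)
qed

theorem theorem1:
  shows "infinite_ident_elic_complexity mode_class mode"
  unfolding infinite_ident_elic_complexity_def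
proof (intro notI, elim exE conjE)
  fix k and \<Gamma> :: "real measure \<Rightarrow> nat \<Rightarrow> real" and f :: "(nat \<Rightarrow> real) \<Rightarrow> real"
  assume "\<forall>P\<in>mode_class. \<Gamma> P \<in> Rk k" and "identifiable mode_class \<Gamma> k"
    and factors: "\<forall>P\<in>mode_class. mode P = f (\<Gamma> P)"
  then obtain P Q where "P \<in> mode_class" "Q \<in> mode_class" "\<Gamma> P = \<Gamma> Q" "mode P \<noteq> mode Q"
    using identifiable_property_merges_modes by blast
  with factors show False
    by simp
qed

end
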